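(* There exist a binary matrix $A$ and two binary column vectors $x,y$ such that $R_{bool}(A|x)=R_{bool}(A|y)=R_{bool}(A)$, but $R_{bool}(A|x,y)>R_{bool}(A)$.
   Context: For a binary $n\times m$ matrix $A$, $R_{bool}(A)$ is the least $k$ such that $A=UV$ with $U\in\{0,1\}^{n\times k}$, $V\in\{0,1\}^{k\times m}$ and the product computed in the Boolean semiring ($1+1=1$). $(A|x_1,\dots,x_t)$ denotes $A$ with columns $x_1,\dots,x_t$ appended on the right. *)

theory Defs
  imports Main
begin

text \<open>Binary matrices of size n x m are represented as functions
  nat \<Rightarrow> nat \<Rightarrow> bool, entry (i,j) relevant for i < n, j < m
  (True = 1, False = 0). Column vectors of length n are nat \<Rightarrow> bool.\<close>

definition bool_factorizable :: "nat \<Rightarrow> nat \<Rightarrow> (nat \<Rightarrow> nat \<Rightarrow> bool) \<Rightarrow> nat \<Rightarrow> bool" where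
  "bool_factorizable n m A k \<longleftrightarrow>
     (\<exists>U V :: nat \<Rightarrow> nat \<Rightarrow> bool.
        \<forall>i<n. \<forall>j<m. A i j = (\<exists>l<k. U i l \<and> V l j))"

definition bool_rank :: "nat \<Rightarrow> nat \<Rightarrow> (nat \<Rightarrow> nat \<Rightarrow> bool) \<Rightarrow> nat" where
  "bool_rank n m A = (LEAST k. bool_factorizable n m A k)"

definition append_col :: "nat \<Rightarrow> (nat \<Rightarrow> nat \<Rightarrow> bool) \<Rightarrow> (nat \<Rightarrow> bool) \<Rightarrow> (nat \<Rightarrow> nat \<Rightarrow> bool)" where
  "append_col m A x = (\<lambda>i j. if j < m then A i j else x i)"

end

theory Submission
  imports Defs
begin

text \<open>The matrix A has columns (0,1,1) and (1,1,1); x = (1,0,1) and y = (1,1,0). Each of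
  (A|x) and (A|y) is covered by two all-ones rectangles, and A already contains the
  fooling set {(0,1),(1,0)}, so all three have Boolean rank 2. In (A|x,y) the entries
  (0,2), (1,3), (2,0) form a fooling set of size 3: no two of them lie in a common
  all-ones rectangle, so each needs its own factor.\<close>

lemma bool_factorizable_rows: "bool_factorizable n m A n"
  unfolding bool_factorizable_def by (rule exI[of _ "\<lambda>i l. i = l"], rule exI[of _ A]) auto

lemma bool_factorizable_bool_rank: "bool_factorizable n m A (bool_rank n m A)"
  unfolding bool_rank_def by (rule LeastI[OF bool_factorizable_rows])

lemma bool_rank_le: "bool_factorizable n m A k \<Longrightarrow> bool_rank n m A \<le> k"
  unfolding bool_rank_def by (rule Least_le)

lemma bool_factorizable_append_colD:
  "bool_factorizable n (m + 1) (append_col m A x) k \<Longrightarrow> bool_factorizable n m A k"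
  unfolding bool_factorizable_def append_col_def by (metis less_SucI Suc_eq_plus1)

lemma bool_rank_le_append_col: "bool_rank n m A \<le> bool_rank n (m + 1) (append_col m A x)"
  by (rule bool_rank_le, rule bool_factorizable_append_colD, rule bool_factorizable_bool_rank)

definition fooling_set :: "nat \<Rightarrow> nat \<Rightarrow> (nat \<Rightarrow> nat \<Rightarrow> bool) \<Rightarrow> (nat \<times> nat) set \<Rightarrow> bool" where
  "fooling_set n m A F \<longleftrightarrow>
     (\<forall>(i, j)\<in>F. i < n \<and> j < m \<and> A i j) \<and>
     (\<forall>(i, j)\<in>F. \<forall>(i', j')\<in>F. (i, j) \<noteq> (i', j') \<longrightarrow> \<not> (A i j' \<and> A i' j))"

text \<open>Sending each entry of F to a factor covering it is injective: two entries sharing a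
  factor l would force both crossing entries to be 1.\<close>
lemma card_le_if_fooling_set:
  assumes fool: "fooling_set n m A F" and fac: "bool_factorizable n m A k"
  shows "card F \<le> k"
proof -
  obtain U V where UV: "\<forall>i<n. \<forall>j<m. A i j = (\<exists>l<k. U i l \<and> V l j)"
    using fac unfolding bool_factorizable_def by blast
  have covered: "\<exists>l<k. U i l \<and> V l j" if "(i, j) \<in> F" for i j
    using UV fool that unfolding fooling_set_def by blast
  define factor where "factor = (\<lambda>(i, j). LEAST l. l < k \<and> U i l \<and> V l j)"
  have factor: "factor (i, j) < k \<and> U i (factor (i, j)) \<and> V (factor (i, j)) j"
    if "(i, j) \<in> F" for i j
    unfolding factor_def using LeastI_ex[OF covered[OF that]] by simp
  have "inj_on factor F"
  proof (rule inj_onI, rule ccontr)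
    fix p q assume p: "p \<in> F" and q: "q \<in> F" and same: "factor p = factor q" and "p \<noteq> q"
    obtain i j i' j' where [simp]: "p = (i, j)" "q = (i', j')" by fastforce
    have bounds: "i < n" "j < m" "i' < n" "j' < m"
      using fool p q unfolding fooling_set_def by auto
    have "A i j' \<and> A i' j"
      using UV bounds factor[of i j] factor[of i' j'] p q same by auto
    with fool p q \<open>p \<noteq> q\<close> show False unfolding fooling_set_def by fastforce
  qed
  moreover have "factor ` F \<subseteq> {..<k}" using factor by auto
  ultimately show ?thesis using card_inj_on_le[of factor F "{..<k}"] by simp
qed

lemma card_le_bool_rank_if_fooling_set: "fooling_set n m A F \<Longrightarrow> card F \<le> bool_rank n m A"
  by (rule card_le_if_fooling_set[OF _ bool_factorizable_bool_rank])

definition ex_A :: "nat \<Rightarrow> nat \<Rightarrow> bool" where "ex_A i j \<longleftrightarrow> j = 1 \<or> i \<noteq> 0"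
definition ex_x :: "nat \<Rightarrow> bool" where "ex_x i \<longleftrightarrow> i \<noteq> 1"
definition ex_y :: "nat \<Rightarrow> bool" where "ex_y i \<longleftrightarrow> i \<noteq> 2"

lemmas ex_simps = ex_A_def ex_x_def ex_y_def append_col_def less_Suc_eq numeral_eq_Suc

lemma bool_factorizable_ex_Ax: "bool_factorizable 3 (2 + 1) (append_col 2 ex_A ex_x) 2"
  unfolding bool_factorizable_def
  by (rule exI[of _ "\<lambda>i l. if l = 0 then i \<noteq> 0 else i \<noteq> 1"],
      rule exI[of _ "\<lambda>l j. if l = 0 then j \<le> 1 else j \<ge> 1"]) (auto simp: ex_simps)

lemma bool_factorizable_ex_Ay: "bool_factorizable 3 (2 + 1) (append_col 2 ex_A ex_y) 2"
  unfolding bool_factorizable_def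
  by (rule exI[of _ "\<lambda>i l. if l = 0 then i \<noteq> 0 else i \<noteq> 2"],
      rule exI[of _ "\<lambda>l j. if l = 0 then j \<le> 1 else j \<ge> 1"]) (auto simp: ex_simps)

lemma fooling_set_ex_A: "fooling_set 3 2 ex_A {(0, 1), (1, 0)}"
  unfolding fooling_set_def by (auto simp: ex_simps)

lemma fooling_set_ex_Axy:
  "fooling_set 3 (2 + 2) (append_col (2 + 1) (append_col 2 ex_A ex_x) ex_y) {(0, 2), (1, 3), (2, 0)}"
  unfolding fooling_set_def by (auto simp: ex_simps)

theorem mainTheorem8:
  shows "\<exists>(n::nat) (m::nat) (A :: nat \<Rightarrow> nat \<Rightarrow> bool) (x :: nat \<Rightarrow> bool) (y :: nat \<Rightarrow> bool).
           bool_rank n (m + 1) (append_col m A x) = bool_rank n m A \<and>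
           bool_rank n (m + 1) (append_col m A y) = bool_rank n m A \<and>
           bool_rank n (m + 2) (append_col (m + 1) (append_col m A x) y) > bool_rank n m A"
proof -
  have rank_A: "2 \<le> bool_rank 3 2 ex_A"
    using card_le_bool_rank_if_fooling_set[OF fooling_set_ex_A] by simp
  have rank_Ax: "bool_rank 3 (2 + 1) (append_col 2 ex_A ex_x) = 2"
    using bool_rank_le[OF bool_factorizable_ex_Ax] bool_rank_le_append_col[of 3 2 ex_A ex_x] rank_A
    by linarith
  have rank_Ay: "bool_rank 3 (2 + 1) (append_col 2 ex_A ex_y) = 2"
    using bool_rank_le[OF bool_factorizable_ex_Ay] bool_rank_le_append_col[of 3 2 ex_A ex_y] rank_A
    by linarith
  have rank_Axy: "3 \<le> bool_rank 3 (2 + 2) (append_col (2 + 1) (append_col 2 ex_A ex_x) ex_y)"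
    using card_le_bool_rank_if_fooling_set[OF fooling_set_ex_Axy] by simp
  have "bool_rank 3 2 ex_A = 2"
    using rank_A rank_Ax bool_rank_le_append_col[of 3 2 ex_A ex_x] by linarith
  then show ?thesis
    using rank_Ax rank_Ay rank_Axy by (intro exI[of _ 3] exI[of _ 2] exI[of _ ex_A] exI[of _ ex_x] exI[of _ ex_y]) simp
qed

end
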